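(* If $S$ is a DRC-semigroup, then $$\mu_S=\{(a,b)\in S\times S:\Theta_a=\Theta_b\text{ and }\Delta_a=\Delta_b\}=\{(a,b)\in S\times S:\vartheta_a=\vartheta_b\text{ and }\vartheta'_a=\vartheta'_b\}.$$
   Context: A DRC-semigroup is $(S,\cdot,D,R)$, $(S,\cdot)$ a semigroup, $D,R:S\to S$ with, for all $a,b$: $D(a)a=a$, $aR(a)=a$; $D(ab)=D(aD(b))$, $R(ab)=R(R(a)b)$; $D(ab)=D(a)D(ab)D(a)$, $R(ab)=R(b)R(ab)R(b)$; $R(D(a))=D(a)$, $D(R(a))=R(a)$. Let $P=\{D(a):a\in S\}$ (projections), partially ordered by $p\le q\iff p=pq=qp$. For $a\in S$ define maps (written on the right): $\Theta_a,\Delta_a:P\to P$ by $p\Theta_a=R(pa)$, $p\Delta_a=D(ap)$; $\vartheta_a:\{p\in P:p\le D(a)\}\to P$, $p\vartheta_a=R(pa)$; $\vartheta'_a:\{p\in P:p\le R(a)\}\to P$, $p\vartheta'_a=D(ap)$. Equality of maps includes equality of domains. A congruence on $S$ is a semigroup congruence $\sigma$ with $a\,\sigma\,b\Rightarrow D(a)\,\sigma\,D(b)$ and $R(a)\,\sigma\,R(b)$; it is projection-separating if $p\,\sigma\,q\Rightarrow p=q$ for $p,q\in P$. $\mu_S$ is the maximum projection-separating congruence on $S$. *)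

theory Defs
  imports Main
begin

definition drc_semigroup :: "('a \<Rightarrow> 'a \<Rightarrow> 'a) \<Rightarrow> ('a \<Rightarrow> 'a) \<Rightarrow> ('a \<Rightarrow> 'a) \<Rightarrow> bool" where
  "drc_semigroup m D R \<longleftrightarrow>
     (\<forall>a b c. m (m a b) c = m a (m b c)) \<and>
     (\<forall>a. m (D a) a = a) \<and> (\<forall>a. m a (R a) = a) \<and>
     (\<forall>a b. D (m a b) = D (m a (D b))) \<and> (\<forall>a b. R (m a b) = R (m (R a) b)) \<and>
     (\<forall>a b. D (m a b) = m (m (D a) (D (m a b))) (D a)) \<and>
     (\<forall>a b. R (m a b) = m (m (R b) (R (m a b))) (R b)) \<and>
     (\<forall>a. R (D a) = D a) \<and> (\<forall>a. D (R a) = R a)"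

definition projections :: "('a \<Rightarrow> 'a) \<Rightarrow> 'a set" where
  "projections D = range D"

definition proj_le :: "('a \<Rightarrow> 'a \<Rightarrow> 'a) \<Rightarrow> 'a \<Rightarrow> 'a \<Rightarrow> bool" where
  "proj_le m p q \<longleftrightarrow> p = m p q \<and> p = m q p"

text \<open>Partial maps P \<rightharpoonup> P (None = outside the domain), so that equality of maps
  includes equality of domains.\<close>
definition Theta_map :: "('a \<Rightarrow> 'a \<Rightarrow> 'a) \<Rightarrow> ('a \<Rightarrow> 'a) \<Rightarrow> ('a \<Rightarrow> 'a) \<Rightarrow> 'a \<Rightarrow> 'a \<Rightarrow> 'a option" where
  "Theta_map m D R a = (\<lambda>p. if p \<in> projections D then Some (R (m p a)) else None)"

definition Delta_map :: "('a \<Rightarrow> 'a \<Rightarrow> 'a) \<Rightarrow> ('a \<Rightarrow> 'a) \<Rightarrow> ('a \<Rightarrow> 'a) \<Rightarrow> 'a \<Rightarrow> 'a \<Rightarrow> 'a option" where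
  "Delta_map m D R a = (\<lambda>p. if p \<in> projections D then Some (D (m a p)) else None)"

definition vtheta_map :: "('a \<Rightarrow> 'a \<Rightarrow> 'a) \<Rightarrow> ('a \<Rightarrow> 'a) \<Rightarrow> ('a \<Rightarrow> 'a) \<Rightarrow> 'a \<Rightarrow> 'a \<Rightarrow> 'a option" where
  "vtheta_map m D R a = (\<lambda>p. if p \<in> projections D \<and> proj_le m p (D a) then Some (R (m p a)) else None)"

definition vtheta'_map :: "('a \<Rightarrow> 'a \<Rightarrow> 'a) \<Rightarrow> ('a \<Rightarrow> 'a) \<Rightarrow> ('a \<Rightarrow> 'a) \<Rightarrow> 'a \<Rightarrow> 'a \<Rightarrow> 'a option" where
  "vtheta'_map m D R a = (\<lambda>p. if p \<in> projections D \<and> proj_le m p (R a) then Some (D (m a p)) else None)"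

definition drc_congruence :: "('a \<Rightarrow> 'a \<Rightarrow> 'a) \<Rightarrow> ('a \<Rightarrow> 'a) \<Rightarrow> ('a \<Rightarrow> 'a) \<Rightarrow> ('a \<times> 'a) set \<Rightarrow> bool" where
  "drc_congruence m D R \<sigma> \<longleftrightarrow>
     equiv UNIV \<sigma> \<and>
     (\<forall>a b c. (a, b) \<in> \<sigma> \<longrightarrow> (m c a, m c b) \<in> \<sigma> \<and> (m a c, m b c) \<in> \<sigma>) \<and>
     (\<forall>a b. (a, b) \<in> \<sigma> \<longrightarrow> (D a, D b) \<in> \<sigma> \<and> (R a, R b) \<in> \<sigma>)"

definition projection_separating :: "('a \<Rightarrow> 'a) \<Rightarrow> ('a \<times> 'a) set \<Rightarrow> bool" where
  "projection_separating D \<sigma> \<longleftrightarrow>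
     (\<forall>p\<in>projections D. \<forall>q\<in>projections D. (p, q) \<in> \<sigma> \<longrightarrow> p = q)"

definition mu :: "('a \<Rightarrow> 'a \<Rightarrow> 'a) \<Rightarrow> ('a \<Rightarrow> 'a) \<Rightarrow> ('a \<Rightarrow> 'a) \<Rightarrow> ('a \<times> 'a) set" where
  "mu m D R = Greatest (\<lambda>\<sigma>. drc_congruence m D R \<sigma> \<and> projection_separating D \<sigma>)"

end

theory Submission
  imports Defs
begin

text \<open>
  Let \<open>a \<approx> b\<close> mean \<open>R (p a) = R (p b)\<close> and \<open>D (a p) = D (b p)\<close> for all
  projections \<open>p\<close>. Any projection-separating congruence is contained in \<open>\<approx>\<close>, since
  \<open>a \<sigma> b\<close> gives \<open>R (p a) \<sigma> R (p b)\<close> between projections. Conversely \<open>\<approx>\<close> is a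
  congruence because \<open>R (p (c a)) = R (R (p c) a)\<close> and \<open>D ((a c) p) = D (a D (c p))\<close>,
  and it separates projections because \<open>D a\<close> and \<open>R a\<close> can be read off as
  \<open>D (a R a)\<close> and \<open>R (D a a)\<close>. Finally \<open>\<Theta>\<^sub>a\<close> is determined by its restriction
  \<open>\<vartheta>\<^sub>a\<close>, as \<open>R (p a) = R (R (p D a) a)\<close> with \<open>R (p D a) \<le> D a\<close>; dually for
  \<open>\<Delta>\<^sub>a\<close> and \<open>\<vartheta>'\<^sub>a\<close>.
\<close>

locale drc =
  fixes m :: "'a \<Rightarrow> 'a \<Rightarrow> 'a" and D R :: "'a \<Rightarrow> 'a"
  assumes drc_semigroup: "drc_semigroup m D R"
begin

lemma assoc: "m (m a b) c = m a (m b c)"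
  and D_mult_self: "m (D a) a = a"
  and mult_R_self: "m a (R a) = a"
  and D_mult_D: "D (m a b) = D (m a (D b))"
  and R_R_mult: "R (m a b) = R (m (R a) b)"
  and D_mult_sandwich: "D (m a b) = m (m (D a) (D (m a b))) (D a)"
  and R_mult_sandwich: "R (m a b) = m (m (R b) (R (m a b))) (R b)"
  and R_D: "R (D a) = D a"
  and D_R: "D (R a) = R a"
  using drc_semigroup unfolding drc_semigroup_def by blast+

lemma D_D: "D (D a) = D a"
  by (metis D_R R_D)

lemma R_in_range_D: "R a \<in> range D"
  by (metis D_R rangeI)

lemma proj_idem: "p \<in> range D \<Longrightarrow> m p p = p"
  by (metis D_mult_self D_D imageE)

lemma proj_le_refl: "p \<in> range D \<Longrightarrow> proj_le m p p"
  unfolding proj_le_def by (simp add: proj_idem)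

lemma proj_le_antisym: "proj_le m p q \<Longrightarrow> proj_le m q p \<Longrightarrow> p = q"
  unfolding proj_le_def by metis

lemma proj_le_if_sandwich:
  assumes "q \<in> range D" and "e = m (m q e) q"
  shows "proj_le m e q"
proof -
  have "m q q = q" using assms(1) by (rule proj_idem)
  then have "m e q = e" and "m q e = e" by (metis assms(2) assoc)+
  then show ?thesis unfolding proj_le_def by simp
qed

lemma D_mult_le: "proj_le m (D (m a b)) (D a)"
  by (rule proj_le_if_sandwich) (auto intro: D_mult_sandwich)

lemma R_mult_le: "proj_le m (R (m a b)) (R b)"
  by (rule proj_le_if_sandwich) (auto intro: R_mult_sandwich R_in_range_D)

lemma R_mult_mult: "R (m p (m c a)) = R (m (R (m p c)) a)"
  unfolding assoc[symmetric] by (rule R_R_mult)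

lemma D_mult_mult: "D (m (m a c) p) = D (m a (D (m c p)))"
  unfolding assoc by (rule D_mult_D)

lemma R_mult_through_D: "R (m p a) = R (m (R (m p (D a))) a)"
  by (metis D_mult_self R_mult_mult)

lemma D_mult_through_R: "D (m a p) = D (m a (D (m (R a) p)))"
  by (metis mult_R_self D_mult_mult)

definition proj_action_eq :: "('a \<times> 'a) set" where
  "proj_action_eq =
     {(a, b). \<forall>p\<in>range D. R (m p a) = R (m p b) \<and> D (m a p) = D (m b p)}"

lemma proj_action_eqD:
  assumes "(a, b) \<in> proj_action_eq" and "p \<in> range D"
  shows "R (m p a) = R (m p b)" and "D (m a p) = D (m b p)"
  using assms unfolding proj_action_eq_def by auto

lemma Theta_Delta_eq_iff_proj_action_eq:
  "{(a, b). Theta_map m D R a = Theta_map m D R b \<and> Delta_map m D R a = Delta_map m D R b}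
     = proj_action_eq"
  unfolding proj_action_eq_def Theta_map_def Delta_map_def projections_def
  by (auto simp: fun_eq_iff split: if_splits)

lemma proj_action_eq_D_eq:
  assumes "(a, b) \<in> proj_action_eq"
  shows "D a = D b"
proof (rule proj_le_antisym)
  have "D a = D (m b (R a))"
    using proj_action_eqD(2)[OF assms R_in_range_D[of a]] by (simp add: mult_R_self)
  then show "proj_le m (D a) (D b)" by (metis D_mult_le)
  have "D b = D (m a (R b))"
    using proj_action_eqD(2)[OF assms R_in_range_D[of b]] by (simp add: mult_R_self)
  then show "proj_le m (D b) (D a)" by (metis D_mult_le)
qed

lemma proj_action_eq_R_eq:
  assumes "(a, b) \<in> proj_action_eq"
  shows "R a = R b"
proof (rule proj_le_antisym)
  have "R a = R (m (D a) b)"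
    using proj_action_eqD(1)[OF assms rangeI[of D a]] by (simp add: D_mult_self)
  then show "proj_le m (R a) (R b)" by (metis R_mult_le)
  have "R b = R (m (D b) a)"
    using proj_action_eqD(1)[OF assms rangeI[of D b]] by (simp add: D_mult_self)
  then show "proj_le m (R b) (R a)" by (metis R_mult_le)
qed

lemma proj_action_eq_mult_left:
  assumes "(a, b) \<in> proj_action_eq"
  shows "(m c a, m c b) \<in> proj_action_eq"
  using proj_action_eqD[OF assms] R_in_range_D
  unfolding proj_action_eq_def by (simp add: R_mult_mult D_mult_mult)

lemma proj_action_eq_mult_right:
  assumes "(a, b) \<in> proj_action_eq"
  shows "(m a c, m b c) \<in> proj_action_eq"
  using proj_action_eqD[OF assms] rangeI[of D]
  unfolding proj_action_eq_def by (simp add: R_mult_mult D_mult_mult)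

lemma drc_congruence_proj_action_eq: "drc_congruence m D R proj_action_eq"
  unfolding drc_congruence_def
proof (intro conjI allI impI)
  show "equiv UNIV proj_action_eq"
    unfolding equiv_def refl_on_def sym_def trans_def proj_action_eq_def by auto
next
  fix a b assume "(a, b) \<in> proj_action_eq"
  then show "(m c a, m c b) \<in> proj_action_eq" and "(m a c, m b c) \<in> proj_action_eq" for c
    by (simp_all add: proj_action_eq_mult_left proj_action_eq_mult_right)
  show "(D a, D b) \<in> proj_action_eq" and "(R a, R b) \<in> proj_action_eq"
    using proj_action_eq_D_eq[OF \<open>(a, b) \<in> proj_action_eq\<close>]
      proj_action_eq_R_eq[OF \<open>(a, b) \<in> proj_action_eq\<close>]
    unfolding proj_action_eq_def by simp_all
qed

lemma projection_separating_proj_action_eq: "projection_separating D proj_action_eq"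
  unfolding projection_separating_def projections_def
  by (auto dest: proj_action_eq_D_eq simp: D_D)

lemma projection_separating_congruence_subset:
  assumes cong: "drc_congruence m D R \<sigma>" and sep: "projection_separating D \<sigma>"
  shows "\<sigma> \<subseteq> proj_action_eq"
proof clarify
  have mult: "(m c x, m c y) \<in> \<sigma>" "(m x c, m y c) \<in> \<sigma>" if "(x, y) \<in> \<sigma>" for x y c
    using cong that unfolding drc_congruence_def by blast+
  have D_R: "(D x, D y) \<in> \<sigma>" "(R x, R y) \<in> \<sigma>" if "(x, y) \<in> \<sigma>" for x y
    using cong that unfolding drc_congruence_def by blast+
  have eq: "x = y" if "x \<in> range D" "y \<in> range D" "(x, y) \<in> \<sigma>" for x y
    using sep that unfolding projection_separating_def projections_def by blast
  fix a b assume "(a, b) \<in> \<sigma>"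
  then have "R (m p a) = R (m p b)" and "D (m a p) = D (m b p)" for p
    by (auto intro!: eq R_in_range_D D_R mult)
  then show "(a, b) \<in> proj_action_eq"
    unfolding proj_action_eq_def by simp
qed

lemma mu_eq_proj_action_eq: "mu m D R = proj_action_eq"
  unfolding mu_def
  by (rule Greatest_equality)
    (use drc_congruence_proj_action_eq projection_separating_proj_action_eq
       projection_separating_congruence_subset in auto)

lemma proj_action_eq_imp_vtheta_eq:
  assumes "(a, b) \<in> proj_action_eq"
  shows "vtheta_map m D R a = vtheta_map m D R b"
    and "vtheta'_map m D R a = vtheta'_map m D R b"
  using assms proj_action_eq_D_eq[OF assms] proj_action_eq_R_eq[OF assms]
  unfolding proj_action_eq_def vtheta_map_def vtheta'_map_def projections_def
  by (auto simp: fun_eq_iff)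

lemma vtheta_eq_imp_R_mult_eq:
  assumes "vtheta_map m D R a = vtheta_map m D R b" and "p \<in> range D"
  shows "R (m p a) = R (m p b)"
proof -
  have dom: "q \<in> range D \<and> proj_le m q (D a) \<longleftrightarrow> q \<in> range D \<and> proj_le m q (D b)" for q
    using fun_cong[OF assms(1), of q] unfolding vtheta_map_def projections_def
    by (auto split: if_splits)
  have "D a = D b"
    using dom[of "D a"] dom[of "D b"] proj_le_refl proj_le_antisym by blast
  let ?q = "R (m p (D a))"
  have "proj_le m ?q (D a)" using R_mult_le[of p "D a"] by (simp add: R_D)
  then have "R (m ?q a) = R (m ?q b)"
    using fun_cong[OF assms(1), of ?q] R_in_range_D \<open>D a = D b\<close>
    unfolding vtheta_map_def projections_def by auto
  then show ?thesis
    using R_mult_through_D[of p a] R_mult_through_D[of p b] \<open>D a = D b\<close> by simp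
qed

lemma vtheta'_eq_imp_D_mult_eq:
  assumes "vtheta'_map m D R a = vtheta'_map m D R b" and "p \<in> range D"
  shows "D (m a p) = D (m b p)"
proof -
  have dom: "q \<in> range D \<and> proj_le m q (R a) \<longleftrightarrow> q \<in> range D \<and> proj_le m q (R b)" for q
    using fun_cong[OF assms(1), of q] unfolding vtheta'_map_def projections_def
    by (auto split: if_splits)
  have "R a = R b"
    using dom[of "R a"] dom[of "R b"] proj_le_refl proj_le_antisym R_in_range_D by blast
  let ?q = "D (m (R a) p)"
  have "proj_le m ?q (R a)" using D_mult_le[of "R a" p] by (simp add: D_R)
  then have "D (m a ?q) = D (m b ?q)"
    using fun_cong[OF assms(1), of ?q] \<open>R a = R b\<close> unfolding vtheta'_map_def projections_def by auto
  then show ?thesis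
    using D_mult_through_R[of a p] D_mult_through_R[of b p] \<open>R a = R b\<close> by simp
qed

lemma proj_action_eq_iff_vtheta_eq:
  "proj_action_eq =
     {(a, b). vtheta_map m D R a = vtheta_map m D R b \<and> vtheta'_map m D R a = vtheta'_map m D R b}"
  using proj_action_eq_imp_vtheta_eq vtheta_eq_imp_R_mult_eq vtheta'_eq_imp_D_mult_eq
  unfolding proj_action_eq_def by blast

end

theorem proposition8p17:
  fixes m :: "'a \<Rightarrow> 'a \<Rightarrow> 'a" and D R :: "'a \<Rightarrow> 'a"
  assumes "drc_semigroup m D R"
  shows "mu m D R = {(a, b). Theta_map m D R a = Theta_map m D R b \<and> Delta_map m D R a = Delta_map m D R b}
       \<and> {(a, b). Theta_map m D R a = Theta_map m D R b \<and> Delta_map m D R a = Delta_map m D R b}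
         = {(a, b). vtheta_map m D R a = vtheta_map m D R b \<and> vtheta'_map m D R a = vtheta'_map m D R b}"
proof -
  interpret drc m D R using assms by (rule drc.intro)
  show ?thesis
    using mu_eq_proj_action_eq Theta_Delta_eq_iff_proj_action_eq proj_action_eq_iff_vtheta_eq
    by simp
qed

end
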